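(* Let $Y$ be a rate-one Yule process with $Y(0)=1$. For every $\delta\in(0,1/2)$ there exist positive constants $C_1,C_2,M_0$ (depending on $\delta$) such that for all $M\ge M_0$, $$\mathbb{P}\big(e^{-s}Y(s)\le e^{-\delta s}\text{ for some }s\ge M\big)\le C_1e^{-C_2M}.$$
   Context: A rate-one Yule process is a pure-birth continuous-time Markov chain on $\{1,2,\dots\}$ jumping from $k$ to $k+1$ at rate $k$. *)

theory Defs
  imports "HOL-Probability.Probability"
begin

text \<open>Holding-time construction of the rate-one Yule process started at Y(0) = 1:
  T k is the holding time in state k (exponential with rate k, k >= 1), all independent.\<close>

definition yule_holding_times :: "'a measure \<Rightarrow> (nat \<Rightarrow> 'a \<Rightarrow> real) \<Rightarrow> bool" where
  "yule_holding_times M T \<longleftrightarrow>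
     prob_space M \<and>
     prob_space.indep_vars M (\<lambda>_. borel) T {1..} \<and>
     (\<forall>k\<ge>1. distributed M lborel (T k) (exponential_density (real k)))"

definition yule_path :: "(nat \<Rightarrow> 'a \<Rightarrow> real) \<Rightarrow> 'a \<Rightarrow> real \<Rightarrow> nat" where
  "yule_path T \<omega> s = 1 + card {n::nat. 1 \<le> n \<and> (\<Sum>k=1..n. T k \<omega>) \<le> s}"

end

theory Submission
  imports Defs
begin

(* If e^(-s) Y(s) <= e^(-delta s) for some s in [j, j+1), then fewer than
   m_j = floor (e^((1-delta)(j+1))) jumps have occurred by time j, i.e. the m_j-th jump time
   S_(m_j) = T_1 + ... + T_(m_j), a sum of independent exponentials of rates 1, ..., m_j, exceeds j.
   The Chernoff bound with exponent 1/2 gives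
     P(S_m > j) <= e^(-j/2) prod_(k<=m) k/(k - 1/2) <= 2 sqrt m e^(-j/2) <= 2 e^(1/2) e^(-delta j/2),
   and a union bound over j >= floor M leaves a geometric tail of order e^(-delta M/2).
   This only needs the jump times to be nonnegative and unbounded, which holds almost surely, and
   works for every delta in (0, 1].  The event is measurable because the path is right-continuous,
   so s may be restricted to the rationals. *)

(* Also for infinite A, where both sides are 0. *)
lemma real_card_eq_enn2real_suminf_indicator:
  fixes A :: "nat set"
  shows "real (card A) = enn2real (\<Sum>n. indicator A n)"
  by (simp flip: nn_integral_count_space_nat add: emeasure_count_space)

lemma borel_measurable_real_card_Collect[measurable]:
  assumes [measurable]: "\<And>n. Measurable.pred M (Q n)"
  shows "(\<lambda>x. real (card {n::nat. Q n x})) \<in> borel_measurable M"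
proof -
  have "(\<lambda>x. real (card {n::nat. Q n x})) = (\<lambda>x. enn2real (\<Sum>n. indicator {n. Q n x} n))"
    by (simp add: real_card_eq_enn2real_suminf_indicator)
  also have "\<dots> \<in> borel_measurable M"
    by measurable
  finally show ?thesis .
qed

lemma eventually_card_sublevel_le:
  fixes S :: "nat \<Rightarrow> real"
  shows "eventually (\<lambda>q. card {n. P n \<and> S n \<le> q} \<le> card {n. P n \<and> S n \<le> s}) (at_right s)"
proof (cases "\<exists>s'>s. finite {n. P n \<and> S n \<le> s'}")
  case True
  then obtain s' where "s < s'" and fin: "finite {n. P n \<and> S n \<le> s'}" by blast
  let ?F = "{n. P n \<and> S n \<le> s' \<and> s < S n}"
  have "eventually (\<lambda>q. s < q \<and> q < s') (at_right s)"
    using \<open>s < s'\<close> by (auto simp: eventually_at_right_field)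
  moreover have "eventually (\<lambda>q. \<forall>n\<in>?F. q < S n) (at_right s)"
    using fin by (intro eventually_ball_finite) (auto simp: eventually_at_right_field elim: rev_finite_subset)
  ultimately show ?thesis
  proof eventually_elim
    case (elim q)
    then have "{n. P n \<and> S n \<le> q} = {n. P n \<and> S n \<le> s}"
      by force
    then show ?case by simp
  qed
next
  case False
  \<comment> \<open>then every sublevel set to the right of s is infinite and has card 0\<close>
  then show ?thesis
    by (auto simp: eventually_at_right_field intro: exI[of _ "s + 1"])
qed

lemma ex_rat_greater_if_eventually_at_right:
  assumes "eventually P (at_right (s::real))"
  shows "\<exists>r::rat. s < of_rat r \<and> P (of_rat r)"
proof -
  obtain b where "s < b" and b: "\<And>y. s < y \<Longrightarrow> y < b \<Longrightarrow> P y"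
    using assms by (auto simp: eventually_at_right_field)
  obtain q where "q \<in> \<rat>" "s < q" "q < b"
    using Rats_dense_in_real[OF \<open>s < b\<close>] by blast
  then show ?thesis
    using b by (auto elim!: Rats_cases)
qed

lemma ex_ge_iff_ex_rat_ge:
  fixes f g :: "real \<Rightarrow> real"
  assumes "\<And>s. eventually (\<lambda>q. f q \<le> f s) (at_right s)" and "mono g"
  shows "(\<exists>s\<ge>M. f s \<le> g s) \<longleftrightarrow> (\<exists>r::rat. M \<le> of_rat r \<and> f (of_rat r) \<le> g (of_rat r))"
proof
  assume "\<exists>s\<ge>M. f s \<le> g s"
  then obtain s where "M \<le> s" "f s \<le> g s" by blast
  moreover obtain r :: rat where "s < of_rat r" "f (of_rat r) \<le> f s"
    using ex_rat_greater_if_eventually_at_right[OF assms(1)] by blast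
  moreover have "g s \<le> g (of_rat r)"
    using \<open>s < of_rat r\<close> \<open>mono g\<close> by (simp add: monoD)
  ultimately show "\<exists>r::rat. M \<le> of_rat r \<and> f (of_rat r) \<le> g (of_rat r)"
    by (intro exI[of _ r]) auto
qed auto

lemma prod_frac_minus_half_sq_le:
  assumes "1 \<le> n"
  shows "(\<Prod>k=1..n. real k / (real k - 1/2))\<^sup>2 \<le> 4 * real n"
  using assms
proof (induction n rule: dec_induct)
  case base
  then show ?case by simp
next
  case (step n)
  define p where "p = (\<Prod>k=1..n. real k / (real k - 1/2))"
  have "(\<Prod>k=1..Suc n. real k / (real k - 1/2)) = p * ((n + 1) / (n + 1/2))"
    by (simp add: p_def prod.nat_ivl_Suc' field_simps)
  then have "(\<Prod>k=1..Suc n. real k / (real k - 1/2))\<^sup>2 = p\<^sup>2 * ((n + 1) / (n + 1/2))\<^sup>2"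
    by (simp only: power_mult_distrib)
  also have "\<dots> \<le> 4 * n * ((n + 1) / (n + 1/2))\<^sup>2"
    using step.IH by (simp add: p_def mult_right_mono)
  also have "\<dots> = 4 * n * (n + 1)\<^sup>2 / (n + 1/2)\<^sup>2"
    by (simp add: power_divide)
  also have "\<dots> \<le> 4 * (n + 1)"
    by (rule pos_divide_le_eq[THEN iffD2]) (simp, simp add: power2_eq_square algebra_simps)
  finally show ?case by simp
qed

lemma prod_frac_minus_half_le:
  assumes "1 \<le> n"
  shows "(\<Prod>k=1..n. real k / (real k - 1/2)) \<le> 2 * sqrt (real n)"
proof (rule power2_le_imp_le)
  show "(\<Prod>k=1..n. real k / (real k - 1/2))\<^sup>2 \<le> (2 * sqrt (real n))\<^sup>2"
    using prod_frac_minus_half_sq_le[OF assms] by (simp add: power_mult_distrib)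
qed simp

lemma prod_frac_Suc: "(\<Prod>k=1..n. real k / (real k + 1)) = 1 / (real n + 1)"
  by (induction n) (simp_all add: prod.nat_ivl_Suc' field_simps)

lemma nn_integral_exp_exponential:
  assumes D: "distributed M lborel X (exponential_density l)" and "0 < l" "\<theta> < l"
  shows "(\<integral>\<^sup>+x. ennreal (exp (\<theta> * X x)) \<partial>M) = ennreal (l / (l - \<theta>))"
proof -
  have "(\<integral>\<^sup>+x. ennreal (exp (\<theta> * X x)) \<partial>M) =
      (\<integral>\<^sup>+x. ennreal (exponential_density l x) * ennreal (exp (\<theta> * x)) \<partial>lborel)"
    by (rule distributed_nn_integral[OF D, symmetric]) simp
  also have "\<dots> = (\<integral>\<^sup>+x. ennreal (l / (l - \<theta>)) * ennreal (exponential_density (l - \<theta>) x) \<partial>lborel)"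
    using assms
    by (intro nn_integral_cong)
       (auto simp: exponential_density_def field_simps simp flip: ennreal_mult exp_add)
  also have "\<dots> = ennreal (l / (l - \<theta>)) * (\<integral>\<^sup>+x. ennreal (exponential_density (l - \<theta>) x) \<partial>lborel)"
    by (rule nn_integral_cmult) simp
  also have "(\<integral>\<^sup>+x. ennreal (exponential_density (l - \<theta>) x) \<partial>lborel) = 1"
    using prob_space.emeasure_space_1[OF prob_space_exponential_density[of "l - \<theta>"]] assms
    by (simp add: emeasure_density)
  finally show ?thesis by simp
qed

lemma exp_power_nat_floor_le:
  fixes \<delta> M :: real
  assumes "0 \<le> \<delta>" "0 \<le> M"
  shows "exp (- \<delta> / 2) ^ nat \<lfloor>M\<rfloor> \<le> exp (\<delta> / 2) * exp (- \<delta> / 2 * M)"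
proof -
  have "exp (- \<delta> / 2) ^ nat \<lfloor>M\<rfloor> = exp (real (nat \<lfloor>M\<rfloor>) * (- \<delta> / 2))"
    by (simp only: exp_of_nat_mult)
  also have "\<dots> \<le> exp ((M - 1) * (- \<delta> / 2))"
    using assms by (simp add: mult_right_mono)
  also have "\<dots> = exp (\<delta> / 2) * exp (- \<delta> / 2 * M)"
    by (simp add: field_simps flip: exp_add)
  finally show ?thesis .
qed

lemma emeasure_UN_le_geometric:
  assumes "\<And>j. B j \<in> sets M" and "\<And>j. emeasure M (B j) \<le> ennreal (c * r ^ j)"
    and "0 \<le> c" "0 \<le> r" "r < 1"
  shows "emeasure M (\<Union>j\<in>{J..}. B j) \<le> ennreal (c * r ^ J / (1 - r))"
proof -
  have sums: "(\<lambda>i. c * r ^ (i + J)) sums (c * r ^ J / (1 - r))"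
    using sums_mult[OF geometric_sums[of r], of "c * r ^ J"] assms
    by (simp add: power_add mult_ac divide_inverse)
  have "(\<Union>j\<in>{J..}. B j) = (\<Union>i. B (i + J))"
    by (auto intro!: bexI[of _ "_ + J"]) (metis le_add_diff_inverse2)
  then have "emeasure M (\<Union>j\<in>{J..}. B j) \<le> (\<Sum>i. emeasure M (B (i + J)))"
    using assms(1) by (auto intro: emeasure_subadditive_countably)
  also have "\<dots> \<le> (\<Sum>i. ennreal (c * r ^ (i + J)))"
    using assms(2) by (intro suminf_le) auto
  also have "\<dots> = ennreal (c * r ^ J / (1 - r))"
    using sums assms by (intro suminf_ennreal_eq) auto
  finally show ?thesis .
qed

definition jump_time :: "(nat \<Rightarrow> 'a \<Rightarrow> real) \<Rightarrow> nat \<Rightarrow> 'a \<Rightarrow> real" where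
  "jump_time T n \<omega> = (\<Sum>k=1..n. T k \<omega>)"

lemma yule_path_eq_card_jump_time:
  "yule_path T \<omega> s = 1 + card {n. 1 \<le> n \<and> jump_time T n \<omega> \<le> s}"
  by (simp add: yule_path_def jump_time_def)

lemma jump_time_mono:
  assumes "\<And>k. 1 \<le> k \<Longrightarrow> 0 \<le> T k \<omega>" and "n \<le> n'"
  shows "jump_time T n \<omega> \<le> jump_time T n' \<omega>"
  unfolding jump_time_def using assms by (intro sum_mono2) auto

lemma less_jump_time_if_yule_path_le:
  assumes nonneg: "\<And>k. 1 \<le> k \<Longrightarrow> 0 \<le> T k \<omega>" and "s < jump_time T N \<omega>"
    and "real (yule_path T \<omega> s) \<le> x"
  shows "s < jump_time T (nat \<lfloor>x\<rfloor>) \<omega>"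
proof (rule ccontr)
  define A where "A = {n. 1 \<le> n \<and> jump_time T n \<omega> \<le> s}"
  have mono: "jump_time T n \<omega> \<le> jump_time T n' \<omega>" if "n \<le> n'" for n n'
    using nonneg that by (rule jump_time_mono)
  assume "\<not> s < jump_time T (nat \<lfloor>x\<rfloor>) \<omega>"
  have sub: "{1..nat \<lfloor>x\<rfloor>} \<subseteq> A"
  proof
    fix n assume "n \<in> {1..nat \<lfloor>x\<rfloor>}"
    then show "n \<in> A"
      using mono[of n "nat \<lfloor>x\<rfloor>"] \<open>\<not> s < jump_time T (nat \<lfloor>x\<rfloor>) \<omega>\<close> by (simp add: A_def)
  qed
  have "finite A"
  proof (rule finite_subset)
    show "A \<subseteq> {..<N}"
    proof
      fix n assume "n \<in> A"
      show "n \<in> {..<N}"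
      proof (rule ccontr)
        assume "n \<notin> {..<N}"
        then have "jump_time T N \<omega> \<le> jump_time T n \<omega>"
          by (intro mono) simp
        then show False
          using \<open>n \<in> A\<close> \<open>s < jump_time T N \<omega>\<close> by (simp add: A_def)
      qed
    qed
  qed simp
  from card_mono[OF this sub] have "nat \<lfloor>x\<rfloor> \<le> card A"
    by simp
  moreover have "1 + card A \<le> nat \<lfloor>x\<rfloor>"
    using assms(3) by (simp add: yule_path_eq_card_jump_time A_def le_nat_floor)
  ultimately show False by simp
qed

definition slow_growth_cap :: "real \<Rightarrow> nat \<Rightarrow> nat" where
  "slow_growth_cap \<delta> j = nat \<lfloor>exp ((1 - \<delta>) * (real j + 1))\<rfloor>"

definition slow_growth_event :: "'a measure \<Rightarrow> (nat \<Rightarrow> 'a \<Rightarrow> real) \<Rightarrow> real \<Rightarrow> real \<Rightarrow> 'a set" where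
  "slow_growth_event P T \<delta> M =
     {\<omega> \<in> space P. \<exists>s \<ge> M. exp (- s) * real (yule_path T \<omega> s) \<le> exp (- \<delta> * s)}"

lemma slow_growth_event_eq:
  "slow_growth_event P T \<delta> M =
     {\<omega> \<in> space P. \<exists>s \<ge> M. real (yule_path T \<omega> s) \<le> exp ((1 - \<delta>) * s)}"
proof -
  have "exp (- \<delta> * s) = exp (- s) * exp ((1 - \<delta>) * s)" for s
    by (simp add: algebra_simps flip: exp_add)
  then show ?thesis
    by (simp add: slow_growth_event_def)
qed

lemma eventually_yule_path_le:
  "eventually (\<lambda>q. real (yule_path T \<omega> q) \<le> real (yule_path T \<omega> s)) (at_right s)"
  using eventually_card_sublevel_le[of "\<lambda>n. 1 \<le> n" "\<lambda>n. jump_time T n \<omega>" s]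
  by (simp add: yule_path_eq_card_jump_time)

locale yule_process = prob_space P for P :: "'a measure" +
  fixes T :: "nat \<Rightarrow> 'a \<Rightarrow> real"
  assumes indep_T: "indep_vars (\<lambda>_. borel) T {1..}"
    and distributed_T: "\<And>k. 1 \<le> k \<Longrightarrow> distributed P lborel (T k) (exponential_density (real k))"
begin

lemma borel_measurable_T: "1 \<le> k \<Longrightarrow> T k \<in> borel_measurable P"
  using distributed_measurable[OF distributed_T] by simp

lemma borel_measurable_jump_time[measurable]: "jump_time T n \<in> borel_measurable P"
  unfolding jump_time_def[abs_def] by (intro borel_measurable_sum) (auto intro: borel_measurable_T)

lemma borel_measurable_yule_path[measurable]: "(\<lambda>\<omega>. real (yule_path T \<omega> s)) \<in> borel_measurable P"
  unfolding yule_path_eq_card_jump_time by simp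

lemma nn_integral_exp_jump_time:
  assumes "\<theta> < 1"
  shows "(\<integral>\<^sup>+\<omega>. ennreal (exp (\<theta> * jump_time T n \<omega>)) \<partial>P) = ennreal (\<Prod>k=1..n. real k / (real k - \<theta>))"
proof -
  have "(\<integral>\<^sup>+\<omega>. ennreal (exp (\<theta> * jump_time T n \<omega>)) \<partial>P) =
      (\<integral>\<^sup>+\<omega>. (\<Prod>k\<in>{1..n}. ennreal (exp (\<theta> * T k \<omega>))) \<partial>P)"
    by (simp add: jump_time_def sum_distrib_left exp_sum prod_ennreal)
  also have "\<dots> = (\<Prod>k\<in>{1..n}. \<integral>\<^sup>+\<omega>. ennreal (exp (\<theta> * T k \<omega>)) \<partial>P)"
  proof (rule indep_vars_nn_integral)
    show "indep_vars (\<lambda>_. borel) (\<lambda>k \<omega>. ennreal (exp (\<theta> * T k \<omega>))) {1..n}"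
      by (rule indep_vars_compose2[where X=T]) (auto intro: indep_vars_subset[OF indep_T])
  qed auto
  also have "\<dots> = (\<Prod>k\<in>{1..n}. ennreal (real k / (real k - \<theta>)))"
    using assms by (intro prod.cong refl nn_integral_exp_exponential) (auto intro: distributed_T)
  also have "\<dots> = ennreal (\<Prod>k=1..n. real k / (real k - \<theta>))"
    using assms by (intro prod_ennreal) auto
  finally show ?thesis .
qed

lemma emeasure_jump_time_ge_bound:
  assumes "0 < \<theta>" "\<theta> < 1"
  shows "emeasure P {\<omega>\<in>space P. a \<le> jump_time T n \<omega>}
    \<le> ennreal (exp (- \<theta> * a) * (\<Prod>k=1..n. real k / (real k - \<theta>)))"
proof -
  have "emeasure P {\<omega>\<in>space P. a \<le> jump_time T n \<omega>}
      \<le> ennreal (exp (- \<theta> * a)) * (\<integral>\<^sup>+\<omega>. ennreal (exp (\<theta> * jump_time T n \<omega>)) * indicator (space P) \<omega> \<partial>P)"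
    using assms by (intro Chernoff_ineq_nn_integral_ge) auto
  also have "(\<integral>\<^sup>+\<omega>. ennreal (exp (\<theta> * jump_time T n \<omega>)) * indicator (space P) \<omega> \<partial>P)
      = ennreal (\<Prod>k=1..n. real k / (real k - \<theta>))"
    using assms by (simp add: nn_integral_exp_jump_time flip: nn_integral_set_ennreal)
  also have "ennreal (exp (- \<theta> * a)) * \<dots> = ennreal (exp (- \<theta> * a) * (\<Prod>k=1..n. real k / (real k - \<theta>)))"
    using assms by (intro ennreal_mult[symmetric] prod_nonneg) auto
  finally show ?thesis .
qed

lemma emeasure_jump_time_le_bound:
  "emeasure P {\<omega>\<in>space P. jump_time T n \<omega> \<le> a} \<le> ennreal (exp a / (real n + 1))"
proof -
  have "emeasure P {\<omega>\<in>space P. jump_time T n \<omega> \<le> a}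
      \<le> ennreal (exp (1 * a)) * (\<integral>\<^sup>+\<omega>. ennreal (exp (- 1 * jump_time T n \<omega>)) * indicator (space P) \<omega> \<partial>P)"
    by (intro Chernoff_ineq_nn_integral_le) auto
  also have "(\<integral>\<^sup>+\<omega>. ennreal (exp (- 1 * jump_time T n \<omega>)) * indicator (space P) \<omega> \<partial>P)
      = ennreal (1 / (real n + 1))"
    using nn_integral_exp_jump_time[of "- 1" n] prod_frac_Suc[of n]
    by (simp flip: nn_integral_set_ennreal)
  finally show ?thesis
    by (simp add: ennreal_mult' flip: ennreal_mult)
qed

lemma AE_holding_times_pos: "AE \<omega> in P. \<forall>k\<ge>1. 0 < T k \<omega>"
  unfolding AE_all_countable
proof
  fix k :: nat
  show "AE \<omega> in P. 1 \<le> k \<longrightarrow> 0 < T k \<omega>"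
  proof (cases "1 \<le> k")
    case True
    have "\<P>(\<omega> in P. T k \<omega> \<le> 0) = 0"
      using exponential_distributedD_le[OF distributed_T[OF True], of 0] True by simp
    then have "AE \<omega> in P. \<not> T k \<omega> \<le> 0"
      using borel_measurable_T[OF True] by (simp add: prob_Collect_eq_0)
    then show ?thesis
      by (simp add: not_le)
  qed simp
qed

lemma AE_jump_time_unbounded: "AE \<omega> in P. \<forall>s. \<exists>n. s < jump_time T n \<omega>"
proof -
  have "AE \<omega> in P. \<exists>n. real j < jump_time T n \<omega>" for j :: nat
  proof -
    let ?N = "{\<omega>\<in>space P. \<forall>n. jump_time T n \<omega> \<le> real j}"
    have le: "measure P ?N \<le> exp (real j) * inverse (real (Suc n))" for n
    proof -
      have "emeasure P ?N \<le> emeasure P {\<omega>\<in>space P. jump_time T n \<omega> \<le> real j}"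
        by (intro emeasure_mono) auto
      also have "\<dots> \<le> ennreal (exp (real j) / (real n + 1))"
        by (rule emeasure_jump_time_le_bound)
      finally show ?thesis
        by (simp add: emeasure_eq_measure field_simps)
    qed
    have lim: "(\<lambda>n. exp (real j) * inverse (real (Suc n))) \<longlonglongrightarrow> exp (real j) * 0"
      by (intro tendsto_mult_left LIMSEQ_inverse_real_of_nat)
    have "measure P ?N \<le> exp (real j) * 0"
      by (rule LIMSEQ_le_const[OF lim]) (use le in blast)
    then have "\<P>(\<omega> in P. \<forall>n. jump_time T n \<omega> \<le> real j) = 0"
      by (simp add: measure_le_0_iff)
    then show ?thesis
      by (simp add: prob_Collect_eq_0 not_le)
  qed
  then have "AE \<omega> in P. \<forall>j::nat. \<exists>n. real j < jump_time T n \<omega>"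
    by (simp add: AE_all_countable)
  then show ?thesis
    by eventually_elim (meson real_arch_simple le_less_trans)
qed

lemma emeasure_jump_time_gt_bound:
  assumes "1 \<le> m"
  shows "emeasure P {\<omega>\<in>space P. a < jump_time T m \<omega>} \<le> ennreal (2 * sqrt (real m) * exp (- a / 2))"
proof -
  have "emeasure P {\<omega>\<in>space P. a < jump_time T m \<omega>} \<le> emeasure P {\<omega>\<in>space P. a \<le> jump_time T m \<omega>}"
    by (intro emeasure_mono) auto
  also have "\<dots> \<le> ennreal (exp (- (1/2) * a) * (\<Prod>k=1..m. real k / (real k - 1/2)))"
    by (rule emeasure_jump_time_ge_bound) auto
  also have "\<dots> \<le> ennreal (2 * sqrt (real m) * exp (- a / 2))"
    using prod_frac_minus_half_le[OF assms] by (intro ennreal_leI) (simp add: mult_ac)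
  finally show ?thesis .
qed

lemma sets_slow_growth_event:
  assumes "\<delta> \<le> 1"
  shows "slow_growth_event P T \<delta> M \<in> sets P"
proof -
  have "mono (\<lambda>s. exp ((1 - \<delta>) * s))"
    using assms by (intro monoI) (simp add: mult_left_mono)
  then have "slow_growth_event P T \<delta> M = {\<omega> \<in> space P. \<exists>r::rat. M \<le> of_rat r \<and>
      real (yule_path T \<omega> (of_rat r)) \<le> exp ((1 - \<delta>) * of_rat r)}"
    unfolding slow_growth_event_eq
    by (intro Collect_cong conj_cong refl ex_ge_iff_ex_rat_ge eventually_yule_path_le)
  also have "\<dots> \<in> sets P"
    by measurable
  finally show ?thesis .
qed

lemma AE_slow_growth_event_imp_late_jump:
  assumes "\<delta> \<le> 1" "0 \<le> M"
  shows "AE \<omega> in P. \<omega> \<in> slow_growth_event P T \<delta> M \<longrightarrow>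
    (\<exists>j\<ge>nat \<lfloor>M\<rfloor>. real j < jump_time T (slow_growth_cap \<delta> j) \<omega>)"
  using AE_holding_times_pos AE_jump_time_unbounded
proof eventually_elim
  case (elim \<omega>)
  show ?case
  proof
    assume "\<omega> \<in> slow_growth_event P T \<delta> M"
    then obtain s where "M \<le> s" and Y: "real (yule_path T \<omega> s) \<le> exp ((1 - \<delta>) * s)"
      by (auto simp: slow_growth_event_eq)
    define j where "j = nat \<lfloor>s\<rfloor>"
    have j: "real j \<le> s" "s \<le> real j + 1" "nat \<lfloor>M\<rfloor> \<le> j"
      using assms \<open>M \<le> s\<close> by (auto simp: j_def nat_mono floor_mono)
    have "exp ((1 - \<delta>) * s) \<le> exp ((1 - \<delta>) * (real j + 1))"
      using assms j by (simp add: mult_left_mono)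
    with Y have "real (yule_path T \<omega> s) \<le> exp ((1 - \<delta>) * (real j + 1))"
      by (rule order_trans)
    moreover obtain N where "s < jump_time T N \<omega>"
      using elim(2) by blast
    ultimately have "s < jump_time T (slow_growth_cap \<delta> j) \<omega>"
      using elim(1) unfolding slow_growth_cap_def
      by (intro less_jump_time_if_yule_path_le) (auto simp: less_imp_le)
    then show "\<exists>j\<ge>nat \<lfloor>M\<rfloor>. real j < jump_time T (slow_growth_cap \<delta> j) \<omega>"
      using j by (intro exI[of _ j]) auto
  qed
qed

lemma emeasure_late_jump_bound:
  assumes "\<delta> \<le> 1"
  shows "emeasure P {\<omega>\<in>space P. real j < jump_time T (slow_growth_cap \<delta> j) \<omega>}
    \<le> ennreal (2 * exp ((1 - \<delta>) / 2) * exp (- \<delta> / 2) ^ j)"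
proof -
  define x where "x = exp ((1 - \<delta>) * (real j + 1))"
  have "1 \<le> x"
    using assms by (simp add: x_def)
  have "sqrt (real (nat \<lfloor>x\<rfloor>)) \<le> sqrt x"
    using \<open>1 \<le> x\<close> by simp
  also have "sqrt x = exp ((1 - \<delta>) * (real j + 1) / 2)"
    unfolding x_def by (rule real_sqrt_unique) (simp_all add: power2_eq_square flip: exp_add)
  finally have "2 * sqrt (real (nat \<lfloor>x\<rfloor>)) * exp (- real j / 2)
      \<le> 2 * exp ((1 - \<delta>) * (real j + 1) / 2) * exp (- real j / 2)"
    by simp
  also have "\<dots> = 2 * exp ((1 - \<delta>) / 2) * exp (- \<delta> / 2) ^ j"
    by (simp add: field_simps flip: exp_add exp_of_nat_mult)
  finally show ?thesis
    using emeasure_jump_time_gt_bound[of "nat \<lfloor>x\<rfloor>" "real j"] \<open>1 \<le> x\<close>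
    by (simp add: x_def slow_growth_cap_def le_nat_floor order_trans ennreal_leI)
qed

lemma measure_slow_growth_event_le:
  assumes "0 < \<delta>" "\<delta> \<le> 1" "0 \<le> M"
  shows "measure P (slow_growth_event P T \<delta> M)
    \<le> 2 * exp (1/2) / (1 - exp (- \<delta> / 2)) * exp (- \<delta> / 2 * M)"
proof -
  define r where "r = exp (- \<delta> / 2)"
  define J where "J = nat \<lfloor>M\<rfloor>"
  define B where "B j = {\<omega>\<in>space P. real j < jump_time T (slow_growth_cap \<delta> j) \<omega>}"
    for j :: nat
  have r: "0 < r" "r < 1"
    using assms by (auto simp: r_def)
  have "emeasure P (slow_growth_event P T \<delta> M) \<le> emeasure P (\<Union>j\<in>{J..}. B j)"
    using AE_slow_growth_event_imp_late_jump[OF assms(2,3)]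
    by (intro emeasure_mono_AE) (auto simp: B_def J_def)
  also have "\<dots> \<le> ennreal (2 * exp ((1 - \<delta>) / 2) * r ^ J / (1 - r))"
    using r emeasure_late_jump_bound[OF assms(2)]
    by (intro emeasure_UN_le_geometric) (auto simp: B_def r_def)
  also have "\<dots> \<le> ennreal (2 * exp ((1 - \<delta>) / 2) * (exp (\<delta> / 2) * exp (- \<delta> / 2 * M)) / (1 - r))"
    using r assms exp_power_nat_floor_le[of \<delta> M]
    by (intro ennreal_leI divide_right_mono mult_left_mono) (auto simp: r_def J_def)
  also have "\<dots> = ennreal (2 * exp (1/2) / (1 - r) * exp (- \<delta> / 2 * M))"
    using exp_add[of "(1 - \<delta>) / 2" "\<delta> / 2"] by (simp add: mult_ac add_divide_distrib[symmetric])
  finally show ?thesis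
    using r by (simp add: emeasure_eq_measure r_def)
qed

end

lemma yule_process_if_yule_holding_times: "yule_holding_times P T \<Longrightarrow> yule_process P T"
  unfolding yule_holding_times_def yule_process_def yule_process_axioms_def by auto

theorem lemma5p12:
  fixes \<delta> :: real
  assumes "0 < \<delta>" and "\<delta> < 1/2"
  shows "\<exists>C1 C2 M0. C1 > 0 \<and> C2 > 0 \<and> M0 > 0 \<and>
     (\<forall>(P :: 'a measure) T. yule_holding_times P T \<longrightarrow>
        (\<forall>M \<ge> M0.
           let E = {\<omega> \<in> space P. \<exists>s \<ge> M. exp (- s) * real (yule_path T \<omega> s) \<le> exp (- \<delta> * s)}
           in E \<in> sets P \<and> measure P E \<le> C1 * exp (- C2 * M)))"
proof -
  define C1 where "C1 = 2 * exp (1/2) / (1 - exp (- \<delta> / 2))"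
  have bound: "slow_growth_event P T \<delta> M \<in> sets P \<and>
      measure P (slow_growth_event P T \<delta> M) \<le> C1 * exp (- (\<delta> / 2) * M)"
    if "yule_holding_times P T" "1 \<le> M" for P :: "'a measure" and T M
  proof -
    interpret yule_process P T
      using that(1) by (rule yule_process_if_yule_holding_times)
    show ?thesis
      using assms that(2) sets_slow_growth_event measure_slow_growth_event_le[of \<delta> M]
      by (simp add: C1_def)
  qed
  have "0 < C1"
    using assms by (simp add: C1_def)
  with bound show ?thesis
    using assms unfolding slow_growth_event_def Let_def
    by (intro exI[of _ C1] exI[of _ "\<delta> / 2"] exI[of _ 1]) auto
qed

end
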